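(* Let $\mathcal E$ be an exchangeability system for a noncommutative probability space $(\mathcal A,\phi)$, let $X_1,\dots,X_n\in\mathcal A$ and $\pi\in\Pi_n$. For each block $B=\{k_1<k_2<\dots<k_b\}$ of $\pi$ choose a primitive root of unity $\omega_b$ of order $b=|B|$ and set, for $i\in B$, $$X_i^{\pi,\omega}=\omega_bX_i^{(k_1)}+\omega_b^2X_i^{(k_2)}+\dots+\omega_b^{b}X_i^{(k_b)}.$$ Then $$K_\pi(X_1,\dots,X_n)=\frac{1}{\prod_{B\in\pi}|B|}\,\tilde\phi(X_1^{\pi,\omega}X_2^{\pi,\omega}\cdots X_n^{\pi,\omega}).$$
   Context: A noncommutative probability space is a pair $(\mathcal A,\phi)$ of a complex unital algebra $\mathcal A$ and a unital linear functional $\phi$. An exchangeability system $\mathcal E$ for $(\mathcal A,\phi)$ consists of a noncommutative probability space $(\mathcal U,\tilde\phi)$ and a family $(\iota_k)_{k\in\mathbb N}$ of embeddings (injective unital algebra homomorphisms) $\iota_k:\mathcal A\to\mathcal A_k\subseteq\mathcal U$ with $\tilde\phi\circ\iota_k=\phi$; write $X^{(k)}=\iota_k(X)$. It is required that for all $X_1,\dots,X_n\in\mathcal A$, all indices $i_1,\dots,i_n\in\mathbb N$ and every bijection $\sigma$ of $\mathbb N$, $\tilde\phi(X_1^{(i_1)}\cdots X_n^{(i_n)})=\tilde\phi(X_1^{(\sigma(i_1))}\cdots X_n^{(\sigma(i_n))})$; so this value depends only on the kernel of $j\mapsto i_j$ (partition of $[n]$ into level sets), and for a partition $\sigma$ of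 $[n]$ it is denoted $\phi_\sigma(X_1,\dots,X_n)$. $\Pi_n$ is the lattice of set partitions of $[n]$ ordered by refinement, with Möbius function $\mu$. The partitioned cumulant is $K_\pi(X_1,\dots,X_n)=\sum_{\sigma\in\Pi_n,\ \sigma\le\pi}\phi_\sigma(X_1,\dots,X_n)\,\mu(\sigma,\pi)$. *)

theory Defs
  imports Complex_Main "HOL-Library.Disjoint_Sets"
begin

definition complex_algebra :: "(complex \<Rightarrow> 'a::ring_1 \<Rightarrow> 'a) \<Rightarrow> bool" where
  "complex_algebra sc \<longleftrightarrow> vector_space sc \<and>
     (\<forall>c x y. sc c (x * y) = sc c x * y \<and> sc c (x * y) = x * sc c y)"

definition ncps :: "(complex \<Rightarrow> 'a::ring_1 \<Rightarrow> 'a) \<Rightarrow> ('a \<Rightarrow> complex) \<Rightarrow> bool" where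
  "ncps sc phi \<longleftrightarrow> complex_algebra sc \<and> Vector_Spaces.linear sc (*) phi \<and> phi 1 = 1"

definition alg_embedding ::
  "(complex \<Rightarrow> 'a::ring_1 \<Rightarrow> 'a) \<Rightarrow> (complex \<Rightarrow> 'u::ring_1 \<Rightarrow> 'u) \<Rightarrow> ('a \<Rightarrow> 'u) \<Rightarrow> bool" where
  "alg_embedding scA scU f \<longleftrightarrow> inj f \<and> Vector_Spaces.linear scA scU f \<and> f 1 = 1 \<and>
     (\<forall>x y. f (x * y) = f x * f y)"

definition exchangeability_system ::
  "(complex \<Rightarrow> 'a::ring_1 \<Rightarrow> 'a) \<Rightarrow> ('a \<Rightarrow> complex) \<Rightarrow>
   (complex \<Rightarrow> 'u::ring_1 \<Rightarrow> 'u) \<Rightarrow> ('u \<Rightarrow> complex) \<Rightarrow> (nat \<Rightarrow> 'a \<Rightarrow> 'u) \<Rightarrow> bool" where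
  "exchangeability_system scA phi scU phiU iota \<longleftrightarrow>
     ncps scA phi \<and> ncps scU phiU \<and>
     (\<forall>k. alg_embedding scA scU (iota k) \<and> (\<forall>x. phiU (iota k x) = phi x)) \<and>
     (\<forall>(xs :: ('a \<times> nat) list) (s :: nat \<Rightarrow> nat). bij s \<longrightarrow>
        phiU (prod_list (map (\<lambda>(x, i). iota i x) xs)) =
        phiU (prod_list (map (\<lambda>(x, i). iota (s i) x) xs)))"

definition refines :: "'b set set \<Rightarrow> 'b set set \<Rightarrow> bool" where
  "refines \<sigma> \<pi> \<longleftrightarrow> (\<forall>B\<in>\<sigma>. \<exists>C\<in>\<pi>. B \<subseteq> C)"

definition set_partitions :: "nat \<Rightarrow> nat set set set" where
  "set_partitions n = {\<sigma>. partition_on {0..<n} \<sigma>}"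

definition block_of :: "'b set set \<Rightarrow> 'b \<Rightarrow> 'b set" where
  "block_of \<pi> j = (THE B. B \<in> \<pi> \<and> j \<in> B)"

text \<open>Standard recursion mu(x,x) = 1, mu(x,y) = - sum_{x <= z < y} mu(x,z); the fuel
  argument (card P) bounds the length of strict chains, so it is never exhausted.\<close>
fun mob_aux :: "nat \<Rightarrow> 'p set \<Rightarrow> ('p \<Rightarrow> 'p \<Rightarrow> bool) \<Rightarrow> 'p \<Rightarrow> 'p \<Rightarrow> int" where
  "mob_aux 0 P le x y = (if x = y then 1 else 0)"
| "mob_aux (Suc k) P le x y = (if x = y then 1 else
      - (\<Sum>z\<in>{z\<in>P. le x z \<and> le z y \<and> z \<noteq> y}. mob_aux k P le x z))"

definition mobius :: "'p set \<Rightarrow> ('p \<Rightarrow> 'p \<Rightarrow> bool) \<Rightarrow> 'p \<Rightarrow> 'p \<Rightarrow> int" where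
  "mobius P le x y = (if x \<in> P \<and> y \<in> P \<and> le x y then mob_aux (card P) P le x y else 0)"

definition mu_part :: "nat \<Rightarrow> nat set set \<Rightarrow> nat set set \<Rightarrow> int" where
  "mu_part n \<sigma> \<pi> = mobius (set_partitions n) refines \<sigma> \<pi>"

text \<open>phi_sigma(X_0,...,X_{n-1}) = phiU(X_0^{(i_0)} ... X_{n-1}^{(i_{n-1})}) for an index
  map with kernel sigma; we use i_j = min of the block of sigma containing j.\<close>
definition phi_part ::
  "('u::ring_1 \<Rightarrow> complex) \<Rightarrow> (nat \<Rightarrow> 'a \<Rightarrow> 'u) \<Rightarrow> nat \<Rightarrow> nat set set \<Rightarrow> (nat \<Rightarrow> 'a) \<Rightarrow> complex" where
  "phi_part phiU iota n \<sigma> X =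
     phiU (prod_list (map (\<lambda>j. iota (Min (block_of \<sigma> j)) (X j)) [0..<n]))"

definition cumulant ::
  "('u::ring_1 \<Rightarrow> complex) \<Rightarrow> (nat \<Rightarrow> 'a \<Rightarrow> 'u) \<Rightarrow> nat \<Rightarrow> nat set set \<Rightarrow> (nat \<Rightarrow> 'a) \<Rightarrow> complex" where
  "cumulant phiU iota n \<pi> X =
     (\<Sum>\<sigma>\<in>{\<sigma>\<in>set_partitions n. refines \<sigma> \<pi>}.
        phi_part phiU iota n \<sigma> X * of_int (mu_part n \<sigma> \<pi>))"

definition primitive_root :: "nat \<Rightarrow> complex \<Rightarrow> bool" where
  "primitive_root b w \<longleftrightarrow> w ^ b = 1 \<and> (\<forall>k. 0 < k \<and> k < b \<longrightarrow> w ^ k \<noteq> 1)"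

definition X_twist ::
  "(complex \<Rightarrow> 'u::ring_1 \<Rightarrow> 'u) \<Rightarrow> (nat \<Rightarrow> 'a \<Rightarrow> 'u) \<Rightarrow> nat set set \<Rightarrow> (nat set \<Rightarrow> complex)
    \<Rightarrow> (nat \<Rightarrow> 'a) \<Rightarrow> nat \<Rightarrow> 'u" where
  "X_twist scU iota \<pi> \<omega> X i =
     (let B = block_of \<pi> i; ks = sorted_list_of_set B in
       (\<Sum>j<card B. scU (\<omega> B ^ (j + 1)) (iota (ks ! j) (X i))))"

end

theory Submission
  imports Defs
begin

text \<open>Expanding the product of the twisted variables by multilinearity writes its expectation
  as a sum over all choices of one summand per factor, i.e. of a position h i in the block of i.
  By exchangeability the moment of such a term depends only on the kernel \<sigma> \<le> \<pi> of the chosen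
  copy indices, so the expectation is the sum over \<sigma> \<le> \<pi> of W(\<sigma>) \<phi>_\<sigma>, where W(\<sigma>) collects
  the root-of-unity coefficients of the choices with kernel \<sigma>. Summing W over an interval
  [\<rho>, \<pi>] amounts to summing over the choices that are constant on the blocks of \<rho>. This sum
  factorises over the blocks C of \<rho> into geometric sums of \<omega>^((k + 1) |C|) over k < |B|, where
  B is the block of \<pi> containing C, and such a sum vanishes unless C = B. So the interval sums
  are the product of the block sizes for \<rho> = \<pi> and 0 otherwise, which characterises W(\<sigma>)
  divided by that product as the Moebius function \<mu>(\<sigma>, \<pi>).\<close>

section \<open>Moebius functions of finite posets\<close>

lemma mob_aux_refl [simp]: "mob_aux k P le x x = 1"
  by (cases k) auto

locale finite_poset =
  fixes P :: "'p set" and le :: "'p \<Rightarrow> 'p \<Rightarrow> bool"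
  assumes finite_carrier: "finite P"
    and reflexive: "x \<in> P \<Longrightarrow> le x x"
    and transitive: "x \<in> P \<Longrightarrow> y \<in> P \<Longrightarrow> z \<in> P \<Longrightarrow> le x y \<Longrightarrow> le y z \<Longrightarrow> le x z"
    and antisymmetric: "x \<in> P \<Longrightarrow> y \<in> P \<Longrightarrow> le x y \<Longrightarrow> le y x \<Longrightarrow> x = y"
begin

definition interval :: "'p \<Rightarrow> 'p \<Rightarrow> 'p set" where
  "interval x y = {z\<in>P. le x z \<and> le z y}"

lemma finite_interval [simp]: "finite (interval x y)"
  unfolding interval_def using finite_carrier by simp

lemma right_end_in_interval: "x \<in> P \<Longrightarrow> y \<in> P \<Longrightarrow> le x y \<Longrightarrow> y \<in> interval x y"
  unfolding interval_def using reflexive by simp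

lemma card_interval_less:
  assumes "x \<in> P" "y \<in> P" "z \<in> interval x y" "z \<noteq> y"
  shows "card (interval x z) < card (interval x y)"
proof (rule psubset_card_mono)
  show "interval x z \<subset> interval x y"
    using assms reflexive transitive antisymmetric unfolding interval_def by blast
qed simp

lemma mob_aux_Suc_eq:
  assumes "x \<in> P" "y \<in> P" "le x y" "card (interval x y) \<le> Suc k"
  shows "mob_aux (Suc k) P le x y = mob_aux k P le x y"
  using assms(2-4)
proof (induction k arbitrary: y)
  case 0
  have "x \<in> interval x y" "y \<in> interval x y"
    using assms(1) 0 reflexive by (auto simp: interval_def)
  with 0 have "x = y"
    by (metis card_le_Suc0_iff_eq finite_interval One_nat_def)
  then show ?case by simp
next
  case (Suc k)
  have "mob_aux (Suc k) P le x z = mob_aux k P le x z" if "z \<in> interval x y - {y}" for z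
    using that Suc card_interval_less[OF assms(1) Suc.prems(1), of z] unfolding interval_def by force
  then show ?case
    by (simp del: mob_aux.simps(2)) (simp add: interval_def)
qed

lemma mobius_rec:
  assumes "x \<in> P" "y \<in> P" "le x y" "x \<noteq> y"
  shows "mobius P le x y = - (\<Sum>z\<in>interval x y - {y}. mobius P le x z)"
proof -
  obtain k where k: "card P = Suc k"
    using assms(1) finite_carrier by (cases "card P") auto
  have "card (interval x z) \<le> Suc k" for z
    unfolding k[symmetric] interval_def by (rule card_mono[OF finite_carrier]) auto
  then have "mob_aux k P le x z = mobius P le x z" if "z \<in> interval x y - {y}" for z
    using that assms mob_aux_Suc_eq[of x z k] k by (auto simp: mobius_def interval_def)
  moreover have "{z\<in>P. le x z \<and> le z y \<and> z \<noteq> y} = interval x y - {y}"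
    unfolding interval_def by auto
  ultimately show ?thesis
    using assms k by (simp add: mobius_def)
qed

lemma sum_mobius_interval:
  assumes "x \<in> P" "y \<in> P" "le x y"
  shows "(\<Sum>z\<in>interval x y. mobius P le x z) = (if x = y then 1 else 0)"
proof (cases "x = y")
  case True
  then have "interval x y = {x}"
    using assms reflexive antisymmetric unfolding interval_def by auto
  with True assms reflexive show ?thesis by (simp add: mobius_def)
next
  case False
  then show ?thesis
    using mobius_rec[OF assms False] right_end_in_interval[OF assms]
    by (simp add: sum.remove)
qed

lemma mobius_unique:
  fixes g :: "'p \<Rightarrow> 'a::comm_ring_1"
  assumes "y \<in> P"
    and g: "\<And>x. x \<in> P \<Longrightarrow> le x y \<Longrightarrow> (\<Sum>z\<in>interval x y. g z) = (if x = y then 1 else 0)"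
    and "x \<in> P" "le x y"
  shows "g x = of_int (mobius P le x y)"
proof -
  let ?\<mu> = "\<lambda>z. of_int (mobius P le x z) :: 'a"
  have lower: "interval x t = {r \<in> interval x y. le r t}" if "t \<in> interval x y" for t
    using that assms transitive unfolding interval_def by blast
  have upper: "interval r y = {t \<in> interval x y. le r t}" if "r \<in> interval x y" for r
    using that assms transitive unfolding interval_def by blast
  have "?\<mu> y = (\<Sum>r\<in>interval x y. ?\<mu> r * (if r = y then 1 else 0))"
    using right_end_in_interval[OF assms(3,1,4)]
    by (simp add: if_distrib[of "(*) _"] sum.delta' cong: if_cong)
  also have "\<dots> = (\<Sum>r\<in>interval x y. \<Sum>t\<in>{t \<in> interval x y. le r t}. ?\<mu> r * g t)"
  proof (intro sum.cong refl)
    fix r assume r: "r \<in> interval x y"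
    then have "(\<Sum>t\<in>{t \<in> interval x y. le r t}. g t) = (if r = y then 1 else 0)"
      unfolding upper[OF r, symmetric] by (intro g) (auto simp: interval_def)
    then show "?\<mu> r * (if r = y then 1 else 0) = (\<Sum>t\<in>{t \<in> interval x y. le r t}. ?\<mu> r * g t)"
      by (simp add: sum_distrib_left[symmetric])
  qed
  also have "\<dots> = (\<Sum>t\<in>interval x y. \<Sum>r\<in>{r \<in> interval x y. le r t}. ?\<mu> r * g t)"
    by (rule sum.swap_restrict) simp_all
  also have "\<dots> = (\<Sum>t\<in>interval x y. g t * of_int (\<Sum>r\<in>interval x t. mobius P le x r))"
    by (intro sum.cong refl) (simp add: lower sum_distrib_left mult.commute)
  also have "\<dots> = (\<Sum>t\<in>interval x y. if x = t then g t else 0)"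
  proof (intro sum.cong refl)
    fix t assume "t \<in> interval x y"
    then show "g t * of_int (\<Sum>r\<in>interval x t. mobius P le x r) = (if x = t then g t else 0)"
      using sum_mobius_interval[of x t] assms(3) by (simp add: interval_def del: of_int_sum)
  qed
  also have "\<dots> = g x"
    using assms(3,4) reflexive[OF assms(3)] finite_interval[of x y] by (simp add: interval_def)
  finally show ?thesis by simp
qed

end

section \<open>Set partitions and kernels\<close>

lemma block_of_eq: "partition_on A \<sigma> \<Longrightarrow> B \<in> \<sigma> \<Longrightarrow> j \<in> B \<Longrightarrow> block_of \<sigma> j = B"
  unfolding block_of_def partition_on_def disjoint_def by (rule the_equality) blast+

lemma block_of_mem:
  assumes "partition_on A \<sigma>" "j \<in> A"
  shows "block_of \<sigma> j \<in> \<sigma>" and "j \<in> block_of \<sigma> j"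
proof -
  obtain B where "B \<in> \<sigma>" "j \<in> B"
    using assms partition_onD1 by blast
  with block_of_eq[OF assms(1)] show "block_of \<sigma> j \<in> \<sigma>" "j \<in> block_of \<sigma> j"
    by simp_all
qed

lemma block_of_eq_block_of:
  "partition_on A \<sigma> \<Longrightarrow> i \<in> A \<Longrightarrow> j \<in> block_of \<sigma> i \<Longrightarrow> block_of \<sigma> j = block_of \<sigma> i"
  by (metis block_of_eq block_of_mem(1))

lemma partition_on_subset_eq:
  assumes "partition_on A \<sigma>" "partition_on A \<pi>" "\<sigma> \<subseteq> \<pi>"
  shows "\<sigma> = \<pi>"
proof (intro equalityI[OF assms(3)] subsetI)
  fix B assume "B \<in> \<pi>"
  moreover have "B \<noteq> {}" "B \<subseteq> A"
    using assms(2) \<open>B \<in> \<pi>\<close> partition_onD1 partition_onD3 by blast+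
  ultimately obtain x where "x \<in> B" "x \<in> A"
    by blast
  then obtain C where "C \<in> \<sigma>" "x \<in> C"
    using assms(1) partition_onD1 by blast
  then have "C \<in> \<pi>"
    using assms(3) by blast
  then have "C = B"
    using block_of_eq[OF assms(2) \<open>C \<in> \<pi>\<close> \<open>x \<in> C\<close>] block_of_eq[OF assms(2) \<open>B \<in> \<pi>\<close> \<open>x \<in> B\<close>]
    by simp
  with \<open>C \<in> \<sigma>\<close> show "B \<in> \<sigma>"
    by simp
qed

lemma refines_imp_subset_block_of:
  assumes "partition_on A \<pi>" "refines \<sigma> \<pi>" "C \<in> \<sigma>" "i \<in> C"
  shows "C \<subseteq> block_of \<pi> i"
proof -
  obtain B where "B \<in> \<pi>" "C \<subseteq> B"
    using assms(2,3) unfolding refines_def by blast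
  with assms(4) show ?thesis
    using block_of_eq[OF assms(1)] by blast
qed

lemma set_partitions_block:
  assumes "\<sigma> \<in> set_partitions n" "C \<in> \<sigma>"
  shows "finite C" "C \<noteq> {}" "C \<subseteq> {0..<n}"
proof -
  have "partition_on {0..<n} \<sigma>"
    using assms(1) unfolding set_partitions_def by simp
  then show "C \<noteq> {}" and "C \<subseteq> {0..<n}"
    using assms(2) partition_onD1 partition_onD3 by blast+
  then show "finite C"
    using finite_subset by blast
qed

lemma finite_set_partitions: "finite (set_partitions n)"
  unfolding set_partitions_def by (simp add: finitely_many_partition_on)

lemma finite_set_partition: "\<sigma> \<in> set_partitions n \<Longrightarrow> finite \<sigma>"
  unfolding set_partitions_def by (auto intro: finite_elements)

lemma refines_iff_Disjoint_Sets_refines: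
  "partition_on A \<sigma> \<Longrightarrow> partition_on A \<pi> \<Longrightarrow> refines \<sigma> \<pi> \<longleftrightarrow> Disjoint_Sets.refines A \<sigma> \<pi>"
  unfolding refines_def Disjoint_Sets.refines_def by blast

interpretation partition_lattice: finite_poset "set_partitions n" refines
proof
  fix \<sigma> \<pi> \<rho>
  show "finite (set_partitions n)" by (rule finite_set_partitions)
  show "\<sigma> \<in> set_partitions n \<Longrightarrow> refines \<sigma> \<sigma>"
    unfolding refines_def by blast
  show "refines \<sigma> \<pi> \<Longrightarrow> refines \<pi> \<rho> \<Longrightarrow> refines \<sigma> \<rho>"
    unfolding refines_def by (meson subset_trans)
  show "\<sigma> \<in> set_partitions n \<Longrightarrow> \<pi> \<in> set_partitions n \<Longrightarrow> refines \<sigma> \<pi> \<Longrightarrow> refines \<pi> \<sigma> \<Longrightarrow> \<sigma> = \<pi>"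
    using refines_asym[of "{0..<n}" \<sigma> \<pi>] refines_iff_Disjoint_Sets_refines[of "{0..<n}"]
    unfolding set_partitions_def by blast
qed

definition kernel_partition :: "'b set \<Rightarrow> ('b \<Rightarrow> 'c) \<Rightarrow> 'b set set" where
  "kernel_partition A a = (\<lambda>i. {j\<in>A. a j = a i}) ` A"

lemma partition_on_kernel_partition: "partition_on A (kernel_partition A a)"
  unfolding kernel_partition_def by (rule partition_onI) (auto simp: disjnt_def)

lemma kernel_partition_in_set_partitions: "kernel_partition {0..<n} a \<in> set_partitions n"
  unfolding set_partitions_def by (simp add: partition_on_kernel_partition)

lemma block_of_kernel_partition:
  "i \<in> A \<Longrightarrow> block_of (kernel_partition A a) i = {j\<in>A. a j = a i}"
  by (rule block_of_eq[OF partition_on_kernel_partition]) (auto simp: kernel_partition_def)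

lemma refines_kernel_partition_iff:
  assumes "partition_on A \<sigma>"
  shows "refines \<sigma> (kernel_partition A a) \<longleftrightarrow> (\<forall>C\<in>\<sigma>. \<forall>i\<in>C. \<forall>j\<in>C. a i = a j)"
proof (intro iffI ballI)
  fix C i j assume "refines \<sigma> (kernel_partition A a)" "C \<in> \<sigma>" "i \<in> C" "j \<in> C"
  then obtain k where "C \<subseteq> {j\<in>A. a j = a k}"
    unfolding refines_def kernel_partition_def by blast
  with \<open>i \<in> C\<close> \<open>j \<in> C\<close> have "a i = a k" "a j = a k"
    by auto
  then show "a i = a j"
    by simp
next
  assume const: "\<forall>C\<in>\<sigma>. \<forall>i\<in>C. \<forall>j\<in>C. a i = a j"
  show "refines \<sigma> (kernel_partition A a)"
    unfolding refines_def
  proof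
    fix C assume "C \<in> \<sigma>"
    then obtain i where "i \<in> C"
      using assms partition_onD3 by (metis ex_in_conv)
    moreover have "C \<subseteq> A"
      using assms \<open>C \<in> \<sigma>\<close> partition_onD1 by blast
    ultimately have "i \<in> A" "C \<subseteq> {j\<in>A. a j = a i}"
      using const \<open>C \<in> \<sigma>\<close> by blast+
    then show "\<exists>K\<in>kernel_partition A a. C \<subseteq> K"
      unfolding kernel_partition_def by blast
  qed
qed

lemma kernel_partition_refines:
  assumes "partition_on A \<pi>" "\<And>i. i \<in> A \<Longrightarrow> a i \<in> block_of \<pi> i"
  shows "refines (kernel_partition A a) \<pi>"
  unfolding refines_def kernel_partition_def
proof (intro ballI, elim imageE)
  fix K i assume i: "i \<in> A" and K: "K = {j\<in>A. a j = a i}"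
  have "j \<in> block_of \<pi> i" if "j \<in> K" for j
  proof -
    have "j \<in> A" "a j = a i"
      using that K by auto
    then have "a i \<in> block_of \<pi> j"
      using assms(2)[OF \<open>j \<in> A\<close>] by simp
    then have "block_of \<pi> j = block_of \<pi> (a i)"
      using block_of_eq[OF assms(1) block_of_mem(1)[OF assms(1) \<open>j \<in> A\<close>]] by simp
    also have "\<dots> = block_of \<pi> i"
      using block_of_eq[OF assms(1) block_of_mem(1)[OF assms(1) i] assms(2)[OF i]] .
    finally have "block_of \<pi> j = block_of \<pi> i" .
    then show ?thesis
      using block_of_mem(2)[OF assms(1) \<open>j \<in> A\<close>] by simp
  qed
  with i show "\<exists>B\<in>\<pi>. K \<subseteq> B"
    using block_of_mem(1)[OF assms(1)] by blast
qed

section \<open>Multilinear expansion and exchangeability\<close>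

lemma prod_list_sum_PiE:
  fixes f :: "'i \<Rightarrow> 'k \<Rightarrow> 'r::ring_1"
  assumes "distinct xs" "\<And>i. i \<in> set xs \<Longrightarrow> finite (A i)"
  shows "prod_list (map (\<lambda>i. \<Sum>k\<in>A i. f i k) xs) =
    (\<Sum>h\<in>PiE (set xs) A. prod_list (map (\<lambda>i. f i (h i)) xs))"
  using assms
proof (induction xs)
  case Nil
  then show ?case by simp
next
  case (Cons x xs)
  have x: "x \<notin> set xs"
    using Cons.prems by simp
  then have upd: "prod_list (map (\<lambda>i. f i (if i = x then y else g i)) xs) =
      prod_list (map (\<lambda>i. f i (g i)) xs)" for g y
    by (intro arg_cong[where f = prod_list] map_cong) auto
  have "prod_list (map (\<lambda>i. \<Sum>k\<in>A i. f i k) (x # xs)) =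
      (\<Sum>y\<in>A x. \<Sum>g\<in>PiE (set xs) A. f x y * prod_list (map (\<lambda>i. f i (g i)) xs))"
    using Cons by (simp add: sum_distrib_left sum_distrib_right) (rule sum.swap)
  also have "\<dots> = (\<Sum>(y, g)\<in>A x \<times> PiE (set xs) A. f x y * prod_list (map (\<lambda>i. f i (g i)) xs))"
    by (rule sum.cartesian_product)
  also have "\<dots> = (\<Sum>h\<in>PiE (set (x # xs)) A. prod_list (map (\<lambda>i. f i (h i)) (x # xs)))"
    using x
    by (intro sum.reindex_bij_witness[of _ "\<lambda>h. (h x, h(x := undefined))" "\<lambda>(y, g). g(x := y)"])
       (auto simp: PiE_def extensional_def upd)
  finally show ?case .
qed

lemma complex_algebra_scale_scale: "complex_algebra sc \<Longrightarrow> sc a (sc b x) = sc (a * b) x"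
  unfolding complex_algebra_def vector_space_def by (simp add: module.scale_scale)

lemma complex_algebra_scale_one: "complex_algebra sc \<Longrightarrow> sc 1 x = x"
  unfolding complex_algebra_def vector_space_def by (simp add: module.scale_one)

lemma prod_list_scale:
  assumes "complex_algebra sc"
  shows "prod_list (map (\<lambda>i. sc (c i) (Y i)) xs) = sc (prod_list (map c xs)) (prod_list (map Y xs))"
proof (induction xs)
  case Nil
  then show ?case
    using complex_algebra_scale_one[OF assms] by simp
next
  case (Cons x xs)
  have "\<And>c x y. sc c (x * y) = sc c x * y" "\<And>c x y. sc c (x * y) = x * sc c y"
    using assms unfolding complex_algebra_def by blast+
  with Cons show ?case
    using complex_algebra_scale_scale[OF assms] by (simp add: mult.commute)
qed

lemma linear_prod_list_sum_scale:
  assumes "complex_algebra sc" "Vector_Spaces.linear sc (*) \<phi>"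
    and "distinct xs" "\<And>i. i \<in> set xs \<Longrightarrow> finite (A i)"
  shows "\<phi> (prod_list (map (\<lambda>i. \<Sum>k\<in>A i. sc (c i k) (Y i k)) xs)) =
    (\<Sum>h\<in>PiE (set xs) A. (\<Prod>i\<in>set xs. c i (h i)) * \<phi> (prod_list (map (\<lambda>i. Y i (h i)) xs)))"
proof -
  have hom: "module_hom sc (*) \<phi>"
    using assms(2) by (simp add: module_hom_iff_linear)
  show ?thesis
    using assms(3,4)
    by (simp add: prod_list_sum_PiE prod_list_scale[OF assms(1)] prod.distinct_set_conv_list
        module_hom.sum[OF hom] module_hom.scale[OF hom])
qed

lemma inj_on_extend_bij:
  fixes g :: "'a \<Rightarrow> 'a"
  assumes "finite A" "inj_on g A"
  obtains s where "bij s" "\<And>x. x \<in> A \<Longrightarrow> s x = g x"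
proof -
  define S where "S = A \<union> g ` A"
  have "finite S"
    using assms(1) by (simp add: S_def)
  moreover have "card (S - A) = card (S - g ` A)"
    using \<open>finite S\<close> assms card_image[OF assms(2)]
    by (simp add: S_def card_Diff_subset)
  ultimately obtain b where b: "bij_betw b (S - A) (S - g ` A)"
    by (meson finite_Diff finite_same_card_bij)
  define s where "s x = (if x \<in> A then g x else if x \<in> S then b x else x)" for x
  have "bij_betw s A (g ` A)"
    using inj_on_imp_bij_betw[OF assms(2)] by (rule bij_betw_cong[THEN iffD1, rotated]) (simp add: s_def)
  moreover have "bij_betw s (S - A) (S - g ` A)"
    using b by (rule bij_betw_cong[THEN iffD1, rotated]) (simp add: s_def)
  ultimately have "bij_betw s S S"
    using bij_betw_combine[of s A "g ` A" "S - A" "S - g ` A"] by (simp add: S_def Un_absorb1 Un_commute)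
  moreover have "bij_betw s (- S) (- S)"
    by (rule bij_betw_cong[THEN iffD1, rotated], rule bij_betw_id) (auto simp: s_def S_def)
  ultimately have "bij_betw s (S \<union> - S) (S \<union> - S)"
    by (rule bij_betw_combine) auto
  then show ?thesis
    using that by (simp add: s_def)
qed

lemma exchangeability_systemD:
  assumes "exchangeability_system scA phi scU phiU iota" "bij s"
  shows "phiU (prod_list (map (\<lambda>(x, i). iota i x) xs)) =
    phiU (prod_list (map (\<lambda>(x, i). iota (s i) x) xs))"
  using assms unfolding exchangeability_system_def by blast

lemma same_kernel_obtains_bij:
  fixes a b :: "'i \<Rightarrow> 'a"
  assumes "finite A" and same_kernel: "\<And>i j. i \<in> A \<Longrightarrow> j \<in> A \<Longrightarrow> a i = a j \<longleftrightarrow> b i = b j"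
  obtains s where "bij s" "\<And>i. i \<in> A \<Longrightarrow> s (a i) = b i"
proof -
  define g where "g = b \<circ> inv_into A a"
  have g: "g (a i) = b i" if "i \<in> A" for i
  proof -
    have "inv_into A a (a i) \<in> A" "a (inv_into A a (a i)) = a i"
      using that by (simp_all add: inv_into_into f_inv_into_f)
    with that same_kernel show ?thesis
      unfolding g_def by simp
  qed
  have "inj_on g (a ` A)"
  proof (rule inj_onI, elim imageE)
    fix u v i j assume "g u = g v" "i \<in> A" "u = a i" "j \<in> A" "v = a j"
    with g have "b i = b j"
      by simp
    with same_kernel \<open>i \<in> A\<close> \<open>j \<in> A\<close> \<open>u = a i\<close> \<open>v = a j\<close> show "u = v"
      by blast
  qed
  then obtain s where "bij s" "\<And>v. v \<in> a ` A \<Longrightarrow> s v = g v"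
    using inj_on_extend_bij assms(1) by blast
  with g that show ?thesis
    by simp
qed

lemma exchangeability_kernel_invariant:
  assumes "exchangeability_system scA phi scU phiU iota"
    and same_kernel: "\<And>i j. i < n \<Longrightarrow> j < n \<Longrightarrow> a i = a j \<longleftrightarrow> b i = b j"
  shows "phiU (prod_list (map (\<lambda>i. iota (a i) (X i)) [0..<n])) =
    phiU (prod_list (map (\<lambda>i. iota (b i) (X i)) [0..<n]))"
proof -
  obtain s where "bij s" and s: "\<And>i. i \<in> {0..<n} \<Longrightarrow> s (a i) = b i"
    by (rule same_kernel_obtains_bij[of "{0..<n}" a b]) (simp_all add: same_kernel)
  from \<open>bij s\<close> have "phiU (prod_list (map (\<lambda>(x, i). iota i x) (map (\<lambda>i. (X i, a i)) [0..<n]))) =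
      phiU (prod_list (map (\<lambda>(x, i). iota (s i) x) (map (\<lambda>i. (X i, a i)) [0..<n])))"
    by (rule exchangeability_systemD[OF assms(1)])
  moreover have "map (\<lambda>i. iota (s (a i)) (X i)) [0..<n] = map (\<lambda>i. iota (b i) (X i)) [0..<n]"
    using s by (intro map_cong) auto
  ultimately show ?thesis
    by (simp add: comp_def)
qed

lemma phi_part_kernel_partition:
  assumes "exchangeability_system scA phi scU phiU iota"
  shows "phi_part phiU iota n (kernel_partition {0..<n} a) X =
    phiU (prod_list (map (\<lambda>i. iota (a i) (X i)) [0..<n]))"
  unfolding phi_part_def
proof (rule exchangeability_kernel_invariant[OF assms])
  fix i j assume "i < n" "j < n"
  define m where "m k = Min {l\<in>{0..<n}. a l = a k}" for k
  have "m k \<in> {l\<in>{0..<n}. a l = a k}" if "k < n" for k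
    unfolding m_def using that by (intro Min_in) auto
  then have "a (m i) = a i" "a (m j) = a j"
    using \<open>i < n\<close> \<open>j < n\<close> by auto
  then have "m i = m j \<longleftrightarrow> a i = a j"
  proof (intro iffI)
    assume "a i = a j"
    then show "m i = m j"
      unfolding m_def by simp
  qed metis
  moreover have "Min (block_of (kernel_partition {0..<n} a) k) = m k" if "k < n" for k
    using that by (simp add: block_of_kernel_partition m_def)
  ultimately show "Min (block_of (kernel_partition {0..<n} a) i) = Min (block_of (kernel_partition {0..<n} a) j)
      \<longleftrightarrow> a i = a j"
    using \<open>i < n\<close> \<open>j < n\<close> by simp
qed

section \<open>Roots of unity and block-constant sums\<close>

lemma primitive_root_power_sum:
  assumes "primitive_root b z" "0 < c" "c \<le> b"
  shows "(\<Sum>j<b. (z ^ (j + 1)) ^ c) = (if c = b then of_nat b else 0)"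
proof -
  have zb: "(z ^ c) ^ b = 1"
    using assms(1) unfolding primitive_root_def by (metis mult.commute power_mult power_one)
  have "(\<Sum>j<b. (z ^ (j + 1)) ^ c) = z ^ c * (\<Sum>j<b. (z ^ c) ^ j)"
    by (simp add: sum_distrib_left power_mult_distrib power_add power_mult[symmetric] mult.commute)
  also have "\<dots> = (if c = b then of_nat b else 0)"
  proof (cases "c = b")
    case True
    with assms(1) show ?thesis
      unfolding primitive_root_def by simp
  next
    case False
    then have "z ^ c \<noteq> 1"
      using assms unfolding primitive_root_def by simp
    with zb False show ?thesis
      by (simp add: sum_gp_strict)
  qed
  finally show ?thesis .
qed

lemma bij_betw_block_constant:
  assumes \<sigma>: "partition_on I \<sigma>" and S: "\<And>C i. C \<in> \<sigma> \<Longrightarrow> i \<in> C \<Longrightarrow> A i = S C"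
  shows "bij_betw (\<lambda>t. restrict (\<lambda>i. t (block_of \<sigma> i)) I) (PiE \<sigma> S)
    {h\<in>PiE I A. \<forall>C\<in>\<sigma>. \<forall>i\<in>C. \<forall>j\<in>C. h i = h j}"
proof -
  have block: "i \<in> I \<Longrightarrow> block_of \<sigma> i \<in> \<sigma> \<and> i \<in> block_of \<sigma> i" for i
    using block_of_mem[OF \<sigma>] by blast
  have block_eq: "C \<in> \<sigma> \<Longrightarrow> i \<in> C \<Longrightarrow> block_of \<sigma> i = C" for C i
    by (rule block_of_eq[OF \<sigma>])
  have sub: "C \<in> \<sigma> \<Longrightarrow> C \<subseteq> I" and some: "C \<in> \<sigma> \<Longrightarrow> (SOME i. i \<in> C) \<in> C" for C
    using \<sigma> partition_onD1 partition_onD3 by (blast, metis ex_in_conv someI_ex)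
  show ?thesis
  proof (rule bij_betwI[where g = "\<lambda>h. restrict (\<lambda>C. h (SOME i. i \<in> C)) \<sigma>"])
    show "(\<lambda>t. restrict (\<lambda>i. t (block_of \<sigma> i)) I) \<in> PiE \<sigma> S \<rightarrow>
        {h\<in>PiE I A. \<forall>C\<in>\<sigma>. \<forall>i\<in>C. \<forall>j\<in>C. h i = h j}"
    proof (intro funcsetI CollectI conjI ballI)
      fix t assume t: "t \<in> PiE \<sigma> S"
      show "restrict (\<lambda>i. t (block_of \<sigma> i)) I \<in> PiE I A"
      proof (rule restrict_PiE_iff[THEN iffD2], intro ballI)
        fix i assume "i \<in> I"
        then have "A i = S (block_of \<sigma> i)"
          using block S by blast
        with \<open>i \<in> I\<close> show "t (block_of \<sigma> i) \<in> A i"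
          using t block by (auto intro: PiE_mem)
      qed
      fix C i j assume "C \<in> \<sigma>" "i \<in> C" "j \<in> C"
      then show "restrict (\<lambda>i. t (block_of \<sigma> i)) I i = restrict (\<lambda>i. t (block_of \<sigma> i)) I j"
        using sub block_eq by auto
    qed
    show "(\<lambda>h. restrict (\<lambda>C. h (SOME i. i \<in> C)) \<sigma>) \<in>
        {h\<in>PiE I A. \<forall>C\<in>\<sigma>. \<forall>i\<in>C. \<forall>j\<in>C. h i = h j} \<rightarrow> PiE \<sigma> S"
    proof (intro funcsetI restrict_PiE_iff[THEN iffD2] ballI)
      fix h C assume "h \<in> {h\<in>PiE I A. \<forall>C\<in>\<sigma>. \<forall>i\<in>C. \<forall>j\<in>C. h i = h j}" "C \<in> \<sigma>"
      moreover from \<open>C \<in> \<sigma>\<close> have "(SOME i. i \<in> C) \<in> I" "A (SOME i. i \<in> C) = S C"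
        using some sub S by blast+
      ultimately show "h (SOME i. i \<in> C) \<in> S C"
        by (auto intro: PiE_mem)
    qed
    fix t assume "t \<in> PiE \<sigma> S"
    then show "restrict (\<lambda>C. restrict (\<lambda>i. t (block_of \<sigma> i)) I (SOME i. i \<in> C)) \<sigma> = t"
      using some sub block_eq by (force simp: PiE_iff extensional_def)
  next
    fix h assume h: "h \<in> {h\<in>PiE I A. \<forall>C\<in>\<sigma>. \<forall>i\<in>C. \<forall>j\<in>C. h i = h j}"
    have "h (SOME j. j \<in> block_of \<sigma> i) = h i" if "i \<in> I" for i
      using h block[OF that] some by blast
    with h show "restrict (\<lambda>i. restrict (\<lambda>C. h (SOME i. i \<in> C)) \<sigma> (block_of \<sigma> i)) I = h"
      using block by (force simp: PiE_iff extensional_def)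
  qed
qed

lemma sum_PiE_block_constant:
  fixes f :: "'i \<Rightarrow> 'k \<Rightarrow> 'r::comm_semiring_1"
  assumes \<sigma>: "partition_on I \<sigma>" and "finite I"
    and S: "\<And>C i. C \<in> \<sigma> \<Longrightarrow> i \<in> C \<Longrightarrow> A i = S C"
    and finite_S: "\<And>C. C \<in> \<sigma> \<Longrightarrow> finite (S C)"
  shows "(\<Sum>h\<in>{h\<in>PiE I A. \<forall>C\<in>\<sigma>. \<forall>i\<in>C. \<forall>j\<in>C. h i = h j}. \<Prod>i\<in>I. f i (h i)) =
    (\<Prod>C\<in>\<sigma>. \<Sum>k\<in>S C. \<Prod>i\<in>C. f i k)"
proof -
  have "finite \<sigma>"
    using \<sigma> \<open>finite I\<close> by (rule finite_elements[rotated])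
  have "(\<Sum>h\<in>{h\<in>PiE I A. \<forall>C\<in>\<sigma>. \<forall>i\<in>C. \<forall>j\<in>C. h i = h j}. \<Prod>i\<in>I. f i (h i)) =
      (\<Sum>t\<in>PiE \<sigma> S. \<Prod>i\<in>I. f i (restrict (\<lambda>i. t (block_of \<sigma> i)) I i))"
    by (rule sum.reindex_bij_betw[OF bij_betw_block_constant[OF \<sigma> S], symmetric])
  also have "\<dots> = (\<Sum>t\<in>PiE \<sigma> S. \<Prod>i\<in>I. f i (t (block_of \<sigma> i)))"
    by (intro sum.cong prod.cong) auto
  also have "\<dots> = (\<Sum>t\<in>PiE \<sigma> S. \<Prod>C\<in>\<sigma>. \<Prod>i\<in>C. f i (t C))"
    using block_of_eq[OF \<sigma>] by (simp add: prod.partition[OF \<open>finite I\<close> \<sigma>] cong: prod.cong)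
  also have "\<dots> = (\<Prod>C\<in>\<sigma>. \<Sum>k\<in>S C. \<Prod>i\<in>C. f i k)"
    using \<open>finite \<sigma>\<close> finite_S by (rule prod_sum_PiE[symmetric])
  finally show ?thesis .
qed

section \<open>The expanded twisted product\<close>

locale twisting =
  fixes n :: nat and \<pi> :: "nat set set" and \<omega> :: "nat set \<Rightarrow> complex"
  assumes partition: "\<pi> \<in> set_partitions n"
    and primitive: "\<forall>B\<in>\<pi>. primitive_root (card B) (\<omega> B)"
begin

text \<open>A term of the expanded product of the twisted variables chooses for each i a position
  h i < |B| in the block B of i; it carries the coefficient weight h and involves the copy
  with index chosen h i, the (h i + 1)-st smallest element of B.\<close>

definition choices :: "(nat \<Rightarrow> nat) set" where
  "choices = PiE {0..<n} (\<lambda>i. {..<card (block_of \<pi> i)})"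

definition chosen :: "(nat \<Rightarrow> nat) \<Rightarrow> nat \<Rightarrow> nat" where
  "chosen h i = sorted_list_of_set (block_of \<pi> i) ! h i"

definition weight :: "(nat \<Rightarrow> nat) \<Rightarrow> complex" where
  "weight h = (\<Prod>i\<in>{0..<n}. \<omega> (block_of \<pi> i) ^ (h i + 1))"

lemma partition_on: "partition_on {0..<n} \<pi>"
  using partition unfolding set_partitions_def by simp

lemma prod_card_blocks_pos: "0 < (\<Prod>B\<in>\<pi>. card B)"
  using finite_set_partition[OF partition] set_partitions_block[OF partition]
  by (simp add: card_gt_0_iff)

lemma finite_choices: "finite choices"
  unfolding choices_def by (simp add: finite_PiE)

lemma block_of_in_partition: "i < n \<Longrightarrow> block_of \<pi> i \<in> \<pi>"
  using block_of_mem(1)[OF partition_on] by simp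

lemma finite_block_of: "i < n \<Longrightarrow> finite (block_of \<pi> i)"
  using set_partitions_block(1)[OF partition block_of_in_partition] .

lemma chosen_in_block_of:
  assumes "h \<in> choices" "i < n"
  shows "chosen h i \<in> block_of \<pi> i"
proof -
  have "h i < length (sorted_list_of_set (block_of \<pi> i))"
    using assms finite_block_of unfolding choices_def by auto
  then show ?thesis
    unfolding chosen_def using finite_block_of[OF assms(2)] by (metis nth_mem set_sorted_list_of_set)
qed

lemma chosen_eq_iff:
  assumes "h \<in> choices" "i < n" "j \<in> block_of \<pi> i"
  shows "chosen h j = chosen h i \<longleftrightarrow> h j = h i"
proof -
  have "j \<in> {0..<n}"
    using assms(2,3) set_partitions_block(3)[OF partition block_of_in_partition] by blast
  then have "j < n"
    by simp
  have same: "block_of \<pi> j = block_of \<pi> i"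
    using block_of_eq_block_of[OF partition_on] assms(2,3) by simp
  have "h k < card (block_of \<pi> k)" if "k < n" for k
    using assms(1) that unfolding choices_def by auto
  then have "h j < card (block_of \<pi> i)" "h i < card (block_of \<pi> i)"
    using assms(2) \<open>j < n\<close> same by metis+
  then show ?thesis
    unfolding chosen_def same using finite_block_of[OF assms(2)]
    by (simp add: nth_eq_iff_index_eq)
qed

lemma kernel_chosen_refines: "h \<in> choices \<Longrightarrow> refines (kernel_partition {0..<n} (chosen h)) \<pi>"
  by (rule kernel_partition_refines[OF partition_on]) (simp add: chosen_in_block_of)

lemma refines_kernel_chosen_iff:
  assumes "\<sigma> \<in> set_partitions n" "refines \<sigma> \<pi>" "h \<in> choices"
  shows "refines \<sigma> (kernel_partition {0..<n} (chosen h)) \<longleftrightarrow> (\<forall>C\<in>\<sigma>. \<forall>i\<in>C. \<forall>j\<in>C. h i = h j)"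
proof -
  have \<sigma>: "partition_on {0..<n} \<sigma>"
    using assms(1) unfolding set_partitions_def by simp
  have "chosen h i = chosen h j \<longleftrightarrow> h i = h j" if "C \<in> \<sigma>" "i \<in> C" "j \<in> C" for C i j
  proof -
    have "i < n"
      using set_partitions_block(3)[OF assms(1) that(1)] that(2) by auto
    moreover have "j \<in> block_of \<pi> i"
      using refines_imp_subset_block_of[OF partition_on assms(2) that(1,2)] that(3) by blast
    ultimately show ?thesis
      using chosen_eq_iff[OF assms(3)] by metis
  qed
  then show ?thesis
    unfolding refines_kernel_partition_iff[OF \<sigma>] by blast
qed

lemma sum_root_powers_block:
  assumes "\<sigma> \<in> set_partitions n" "refines \<sigma> \<pi>" "C \<in> \<sigma>"
  shows "(\<Sum>k\<in>{..<card (block_of \<pi> (Min C))}. \<Prod>i\<in>C. \<omega> (block_of \<pi> i) ^ (k + 1)) =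
    (if C \<in> \<pi> then of_nat (card C) else 0)"
proof -
  define B where "B = block_of \<pi> (Min C)"
  have C: "finite C" "C \<noteq> {}" "C \<subseteq> {0..<n}"
    using set_partitions_block[OF assms(1,3)] by simp_all
  then have "Min C \<in> C"
    by simp
  then have "C \<subseteq> B" and B: "B \<in> \<pi>" "finite B"
    unfolding B_def
    using refines_imp_subset_block_of[OF partition_on assms(2,3)] C(3)
      block_of_in_partition finite_block_of by auto
  have block_i: "block_of \<pi> i = B" if "i \<in> C" for i
    using block_of_eq[OF partition_on B(1)] that \<open>C \<subseteq> B\<close> by blast
  have "C \<in> \<pi> \<longleftrightarrow> card C = card B"
  proof
    assume "C \<in> \<pi>"
    then show "card C = card B"
      using block_of_eq[OF partition_on] \<open>Min C \<in> C\<close> unfolding B_def by simp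
  next
    assume "card C = card B"
    then show "C \<in> \<pi>"
      using card_subset_eq[OF B(2) \<open>C \<subseteq> B\<close>] B(1) by simp
  qed
  moreover have "0 < card C" "card C \<le> card B"
    using C B(2) \<open>C \<subseteq> B\<close> by (simp_all add: card_gt_0_iff card_mono)
  ultimately show ?thesis
    using primitive_root_power_sum[of "card B" "\<omega> B" "card C"] primitive B(1) block_i
    by (simp add: B_def[symmetric] lessThan_def)
qed

lemma sum_weight_block_constant:
  assumes "\<sigma> \<in> set_partitions n" "refines \<sigma> \<pi>"
  shows "(\<Sum>h\<in>{h\<in>choices. \<forall>C\<in>\<sigma>. \<forall>i\<in>C. \<forall>j\<in>C. h i = h j}. weight h) =
    (if \<sigma> = \<pi> then of_nat (\<Prod>B\<in>\<pi>. card B) else 0)"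
proof -
  have \<sigma>: "partition_on {0..<n} \<sigma>"
    using assms(1) unfolding set_partitions_def by simp
  have "block_of \<pi> i = block_of \<pi> (Min C)" if "C \<in> \<sigma>" "i \<in> C" for C i
  proof -
    have "Min C \<in> C" "i < n"
      using set_partitions_block[OF assms(1) that(1)] that(2) by auto
    then show ?thesis
      using block_of_eq_block_of[OF partition_on] refines_imp_subset_block_of[OF partition_on assms(2) that]
      by auto
  qed
  then have "(\<Sum>h\<in>{h\<in>choices. \<forall>C\<in>\<sigma>. \<forall>i\<in>C. \<forall>j\<in>C. h i = h j}. weight h) =
      (\<Prod>C\<in>\<sigma>. \<Sum>k\<in>{..<card (block_of \<pi> (Min C))}. \<Prod>i\<in>C. \<omega> (block_of \<pi> i) ^ (k + 1))"
    unfolding choices_def weight_def by (intro sum_PiE_block_constant[OF \<sigma>]) auto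
  also have "\<dots> = (\<Prod>C\<in>\<sigma>. if C \<in> \<pi> then of_nat (card C) else 0)"
    using sum_root_powers_block[OF assms] by simp
  also have "\<dots> = (if \<sigma> = \<pi> then of_nat (\<Prod>B\<in>\<pi>. card B) else 0)"
  proof (cases "\<sigma> \<subseteq> \<pi>")
    case True
    then have "\<sigma> = \<pi>"
      using partition_on_subset_eq[OF \<sigma> partition_on] by simp
    then show ?thesis
      by simp
  next
    case False
    then obtain C where "C \<in> \<sigma>" "C \<notin> \<pi>"
      by blast
    then have "(\<Prod>C\<in>\<sigma>. if C \<in> \<pi> then of_nat (card C) else 0) = (0::complex)"
      using finite_set_partition[OF assms(1)] by (intro prod_zero bexI[of _ C]) simp_all
    with False show ?thesis
      by auto
  qed
  finally show ?thesis .
qed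

lemma sum_weight_kernel_eq_mobius:
  assumes "\<sigma> \<in> set_partitions n" "refines \<sigma> \<pi>"
  shows "(\<Sum>h\<in>{h\<in>choices. kernel_partition {0..<n} (chosen h) = \<sigma>}. weight h) =
    of_nat (\<Prod>B\<in>\<pi>. card B) * of_int (mu_part n \<sigma> \<pi>)"
proof -
  define P where "P = (\<Prod>B\<in>\<pi>. card B)"
  define W where "W \<tau> = (\<Sum>h\<in>{h\<in>choices. kernel_partition {0..<n} (chosen h) = \<tau>}. weight h)" for \<tau>
  have "P \<noteq> 0"
    using prod_card_blocks_pos unfolding P_def by simp
  have "(\<Sum>\<tau>\<in>partition_lattice.interval n \<rho> \<pi>. W \<tau> / of_nat P) = (if \<rho> = \<pi> then 1 else 0)"
    if "\<rho> \<in> set_partitions n" "refines \<rho> \<pi>" for \<rho>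
  proof -
    \<comment> \<open>the kernels in [\<rho>, \<pi>] are exactly those of the choices constant on the blocks of \<rho>\<close>
    let ?above = "{h\<in>choices. refines \<rho> (kernel_partition {0..<n} (chosen h))}"
    have "(\<Sum>\<tau>\<in>partition_lattice.interval n \<rho> \<pi>. W \<tau>) =
        (\<Sum>\<tau>\<in>partition_lattice.interval n \<rho> \<pi>.
           \<Sum>h\<in>{h. h \<in> ?above \<and> kernel_partition {0..<n} (chosen h) = \<tau>}. weight h)"
      unfolding W_def partition_lattice.interval_def
      by (intro sum.cong refl arg_cong[where f = "sum weight"]) auto
    also have "\<dots> = (\<Sum>h\<in>?above. weight h)"
      unfolding partition_lattice.interval_def
      by (rule sum.group)
        (auto simp: finite_choices kernel_partition_in_set_partitions kernel_chosen_refines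
          finite_set_partitions)
    also have "?above = {h\<in>choices. \<forall>C\<in>\<rho>. \<forall>i\<in>C. \<forall>j\<in>C. h i = h j}"
      using refines_kernel_chosen_iff[OF that] by blast
    also have "(\<Sum>h\<in>\<dots>. weight h) = (if \<rho> = \<pi> then of_nat P else 0)"
      unfolding P_def by (rule sum_weight_block_constant[OF that])
    finally show ?thesis
      using \<open>P \<noteq> 0\<close> by (simp add: sum_divide_distrib[symmetric])
  qed
  then have "W \<sigma> / of_nat P = of_int (mu_part n \<sigma> \<pi>)"
    unfolding mu_part_def using assms by (intro partition_lattice.mobius_unique[OF partition]) auto
  then show ?thesis
    using \<open>P \<noteq> 0\<close> unfolding W_def P_def
    by (simp add: divide_eq_eq mult.commute del: of_nat_prod)
qed

lemma sum_weight_kernel: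
  "(\<Sum>h\<in>choices. weight h * F (kernel_partition {0..<n} (chosen h))) =
    of_nat (\<Prod>B\<in>\<pi>. card B) * (\<Sum>\<sigma>\<in>{\<sigma>\<in>set_partitions n. refines \<sigma> \<pi>}. F \<sigma> * of_int (mu_part n \<sigma> \<pi>))"
proof -
  have "(\<Sum>h\<in>choices. weight h * F (kernel_partition {0..<n} (chosen h))) =
      (\<Sum>\<sigma>\<in>{\<sigma>\<in>set_partitions n. refines \<sigma> \<pi>}.
         \<Sum>h\<in>{h\<in>choices. kernel_partition {0..<n} (chosen h) = \<sigma>}.
           weight h * F (kernel_partition {0..<n} (chosen h)))"
    by (rule sum.group[symmetric])
      (auto simp: finite_choices finite_set_partitions kernel_chosen_refines
        kernel_partition_in_set_partitions)
  also have "\<dots> = (\<Sum>\<sigma>\<in>{\<sigma>\<in>set_partitions n. refines \<sigma> \<pi>}.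
      (\<Sum>h\<in>{h\<in>choices. kernel_partition {0..<n} (chosen h) = \<sigma>}. weight h) * F \<sigma>)"
    by (intro sum.cong refl) (simp add: sum_distrib_right)
  also have "\<dots> = of_nat (\<Prod>B\<in>\<pi>. card B) * (\<Sum>\<sigma>\<in>{\<sigma>\<in>set_partitions n. refines \<sigma> \<pi>}. F \<sigma> * of_int (mu_part n \<sigma> \<pi>))"
    by (simp add: sum_distrib_left sum_weight_kernel_eq_mobius mult_ac)
  finally show ?thesis .
qed

end

theorem proposition2p8:
  fixes scA :: "complex \<Rightarrow> 'a::ring_1 \<Rightarrow> 'a" and phi :: "'a \<Rightarrow> complex"
    and scU :: "complex \<Rightarrow> 'u::ring_1 \<Rightarrow> 'u" and phiU :: "'u \<Rightarrow> complex"
    and iota :: "nat \<Rightarrow> 'a \<Rightarrow> 'u"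
    and n :: nat and X :: "nat \<Rightarrow> 'a" and \<pi> :: "nat set set" and \<omega> :: "nat set \<Rightarrow> complex"
  assumes "exchangeability_system scA phi scU phiU iota"
    and "\<pi> \<in> set_partitions n"
    and "\<forall>B\<in>\<pi>. primitive_root (card B) (\<omega> B)"
  shows "cumulant phiU iota n \<pi> X =
    phiU (prod_list (map (X_twist scU iota \<pi> \<omega> X) [0..<n])) / of_nat (\<Prod>B\<in>\<pi>. card B)"
proof -
  interpret twisting n \<pi> \<omega>
    using assms(2,3) by unfold_locales
  have "complex_algebra scU" "Vector_Spaces.linear scU (*) phiU"
    using assms(1) unfolding exchangeability_system_def ncps_def by simp_all
  have twist: "X_twist scU iota \<pi> \<omega> X = (\<lambda>i. \<Sum>j\<in>{..<card (block_of \<pi> i)}.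
      scU (\<omega> (block_of \<pi> i) ^ (j + 1)) (iota (sorted_list_of_set (block_of \<pi> i) ! j) (X i)))"
    unfolding X_twist_def Let_def ..
  have "phiU (prod_list (map (X_twist scU iota \<pi> \<omega> X) [0..<n])) =
      (\<Sum>h\<in>choices. weight h * phiU (prod_list (map (\<lambda>i. iota (chosen h i) (X i)) [0..<n])))"
    unfolding twist choices_def weight_def chosen_def
    by (subst linear_prod_list_sum_scale[OF \<open>complex_algebra scU\<close> \<open>Vector_Spaces.linear scU (*) phiU\<close>])
      simp_all
  also have "\<dots> = (\<Sum>h\<in>choices. weight h * phi_part phiU iota n (kernel_partition {0..<n} (chosen h)) X)"
    by (simp add: phi_part_kernel_partition[OF assms(1)])
  also have "\<dots> = of_nat (\<Prod>B\<in>\<pi>. card B) * cumulant phiU iota n \<pi> X"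
    unfolding cumulant_def by (rule sum_weight_kernel)
  finally show ?thesis
    using prod_card_blocks_pos by (simp del: of_nat_prod)
qed

end
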